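(* Let $\theta$ be a complex Pisot number with $1<|\theta|^2<2$ and $\lambda=1/\theta$. Then $\theta$ has degree at least $3$, $\theta$ is an algebraic unit, and there is $\delta>0$ such that $|\widehat{\nu}_\lambda(2\pi\overline{\theta}^N)|\ge\delta$ for all integers $N\ge1$; in particular $\widehat{\nu}_\lambda(\xi)\not\to0$ as $|\xi|\to\infty$.
   Context: A non-real algebraic integer $\theta$ with $|\theta|>1$ is a complex Pisot number if all its Galois conjugates other than $\overline\theta$ have modulus less than one. $\nu_\lambda$ is the distribution of $\sum_{n\ge0}\pm\lambda^n$ with independent fair signs. Identifying $\mathbb R^2$ with $\mathbb C$, $\widehat{\nu}_\lambda(\xi)=\int e^{i\,\mathrm{Re}(t\overline\xi)}\,d\nu_\lambda(t)$ for $\xi\in\mathbb C$; one has $\widehat{\nu}_\lambda(\xi)=\prod_{n\ge0}\cos(\mathrm{Re}(\lambda^n\overline\xi))$. *)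

theory Defs
  imports "HOL-Analysis.Analysis" "HOL-Computational_Algebra.Computational_Algebra"
begin

text \<open>Galois conjugates of z: roots of its minimal polynomial over Q
  (any irreducible rational polynomial vanishing at z).\<close>
definition galois_conjugates :: "complex \<Rightarrow> complex set" where
  "galois_conjugates z = {w. \<exists>p :: rat poly. p \<noteq> 0 \<and> irreducible p \<and>
      poly (map_poly of_rat p) z = 0 \<and> poly (map_poly of_rat p) w = 0}"

definition alg_degree :: "complex \<Rightarrow> nat" where
  "alg_degree z = (LEAST n. \<exists>p :: rat poly. p \<noteq> 0 \<and> degree p = n \<and> poly (map_poly of_rat p) z = 0)"

definition complex_pisot :: "complex \<Rightarrow> bool" where
  "complex_pisot \<theta> \<longleftrightarrow> algebraic_int \<theta> \<and> Im \<theta> \<noteq> 0 \<and> cmod \<theta> > 1 \<and>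
     (\<forall>z \<in> galois_conjugates \<theta> - {\<theta>, cnj \<theta>}. cmod z < 1)"

definition algebraic_unit :: "complex \<Rightarrow> bool" where
  "algebraic_unit z \<longleftrightarrow> algebraic_int z \<and> algebraic_int (inverse z)"

text \<open>Fourier transform of the Bernoulli convolution nu_lambda, via its infinite product.\<close>
definition nu_hat :: "complex \<Rightarrow> complex \<Rightarrow> real" where
  "nu_hat l \<xi> = lim (\<lambda>N. \<Prod>n<N. cos (Re (l ^ n * cnj \<xi>)))"

end

(*
  Write lambda = 1/theta. For n <= N the factor lambda^n * conj (2 pi conj(theta)^N) of the product
  defining nu_hat equals 2 pi theta^(N-n), and for n >= N it equals 2 pi lambda^(n-N). Hence
  nu_hat lambda (2 pi conj(theta)^N) is the finite product of cos (2 pi Re theta^k), 1 <= k <= N,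
  times the fixed infinite product G of cos (2 pi Re lambda^j). No factor vanishes, since
  cos (2 pi Re x) = 0 would make 2 (x + conj x) an odd integer, impossible for an algebraic
  integer x. G converges because |lambda| < 1. For the finite products, the trace of theta^k is an
  integer, so 2 Re theta^k lies within sum_w |w|^k of an integer, w ranging over the conjugates of
  theta other than theta and conj theta, all of modulus < 1; the factors therefore approach +-1
  summably fast and the partial products stay away from 0.

  The constant term of the minimal polynomial of theta is +-|theta|^2 times the product of these w:
  a nonzero integer of modulus < 2, hence +-1, so theta is a unit; and if there were no w it would
  equal |theta|^2, which lies strictly between 1 and 2, so the degree is at least 3. That algebraic
  integers form a ring (needed for the nonvanishing and for Gauss's lemma) is proved with Kronecker
  products of companion matrices.
*)
theory Submission
  imports Defs "Jordan_Normal_Form.Char_Poly"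
begin

unbundle no vec_syntax
no_notation fps_nth (infixl \<open>$\<close> 75)

section \<open>Algebraic integers form a ring\<close>

definition kron_vec :: "'a::times vec \<Rightarrow> 'a vec \<Rightarrow> 'a vec" where
  "kron_vec u w = vec (dim_vec u * dim_vec w) (\<lambda>i. u $ (i div dim_vec w) * w $ (i mod dim_vec w))"

definition kron_mat :: "'a::times mat \<Rightarrow> 'a mat \<Rightarrow> 'a mat" where
  "kron_mat A B = mat (dim_row A * dim_row B) (dim_col A * dim_col B)
     (\<lambda>(i, j). A $$ (i div dim_row B, j div dim_col B) * B $$ (i mod dim_row B, j mod dim_col B))"

lemma div_mod_less_of_less_mult:
  fixes i :: nat
  assumes "i < m * n"
  shows "i div n < m" and "i mod n < n"
  using assms by (auto simp: less_mult_imp_div_less intro!: mod_less_divisor Nat.gr0I)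

lemma sum_lessThan_mult_nat:
  fixes f :: "nat \<Rightarrow> 'a::comm_monoid_add"
  shows "(\<Sum>l<m * n. f l) = (\<Sum>i<m. \<Sum>j<n. f (i * n + j))"
proof -
  have "(\<Sum>l\<in>{i * n..<i * n + n}. f l) = (\<Sum>j<n. f (i * n + j))" for i
    using sum.shift_bounds_nat_ivl[of f 0 "i * n" n]
    by (simp add: atLeast0LessThan add.commute)
  then show ?thesis
    using sum.nat_group[of "\<lambda>l. f l" n m] by simp
qed

lemma kron_mult_mat_vec:
  fixes A B :: "'a::comm_semiring_0 mat"
  assumes "dim_col A = dim_vec u" and "dim_col B = dim_vec w"
  shows "kron_mat A B *\<^sub>v kron_vec u w = kron_vec (A *\<^sub>v u) (B *\<^sub>v w)"
proof (rule eq_vecI)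
  fix i assume "i < dim_vec (kron_vec (A *\<^sub>v u) (B *\<^sub>v w))"
  then have i: "i < dim_row A * dim_row B" by (simp add: kron_vec_def)
  note a = div_mod_less_of_less_mult(1)[OF i] and b = div_mod_less_of_less_mult(2)[OF i]
  have "(kron_mat A B *\<^sub>v kron_vec u w) $ i =
      (\<Sum>p<dim_vec u. \<Sum>q<dim_vec w.
        (A $$ (i div dim_row B, p) * u $ p) * (B $$ (i mod dim_row B, q) * w $ q))"
    using i assms
    by (auto simp: kron_mat_def kron_vec_def scalar_prod_def atLeast0LessThan sum_lessThan_mult_nat
        ac_simps div_add1_eq intro!: sum.cong)
  also have "\<dots> = (A *\<^sub>v u) $ (i div dim_row B) * (B *\<^sub>v w) $ (i mod dim_row B)"
    using a b assms by (simp add: scalar_prod_def sum_product atLeast0LessThan)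
  finally show "(kron_mat A B *\<^sub>v kron_vec u w) $ i = kron_vec (A *\<^sub>v u) (B *\<^sub>v w) $ i"
    using i by (simp add: kron_vec_def)
qed (simp add: kron_mat_def kron_vec_def)

lemma kron_vec_smult_left:
  fixes u w :: "'a::comm_semiring_0 vec"
  shows "kron_vec (a \<cdot>\<^sub>v u) w = a \<cdot>\<^sub>v kron_vec u w"
  by (rule eq_vecI) (auto simp: kron_vec_def ac_simps div_mod_less_of_less_mult)

lemma kron_vec_smult_right:
  fixes u w :: "'a::comm_semiring_0 vec"
  shows "kron_vec u (b \<cdot>\<^sub>v w) = b \<cdot>\<^sub>v kron_vec u w"
  by (rule eq_vecI) (auto simp: kron_vec_def ac_simps div_mod_less_of_less_mult)

lemma kron_vec_nonzero:
  fixes u w :: "'a::{comm_semiring_0, semiring_no_zero_divisors} vec"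
  assumes "u \<in> carrier_vec d" "u \<noteq> 0\<^sub>v d" "w \<in> carrier_vec e" "w \<noteq> 0\<^sub>v e"
  shows "kron_vec u w \<noteq> 0\<^sub>v (d * e)"
proof -
  have "\<exists>i<d. u $ i \<noteq> 0" "\<exists>j<e. w $ j \<noteq> 0"
    using assms by (auto intro: eq_vecI)
  then obtain i j where ij: "i < d" "u $ i \<noteq> 0" "j < e" "w $ j \<noteq> 0"
    by blast
  have "i * e + j < Suc i * e"
    using ij by simp
  also have "\<dots> \<le> d * e"
    using ij by (intro mult_le_mono1) simp
  finally have "i * e + j < d * e" .
  moreover have "kron_vec u w $ (i * e + j) = u $ i * w $ j"
    using ij assms \<open>i * e + j < d * e\<close> by (simp add: kron_vec_def)
  ultimately show ?thesis
    using ij by auto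
qed

lemma kron_mat_carrier:
  "A \<in> carrier_mat d d \<Longrightarrow> B \<in> carrier_mat e e \<Longrightarrow> kron_mat A B \<in> carrier_mat (d * e) (d * e)"
  by (simp add: kron_mat_def)

lemma of_int_kron_mat:
  "map_mat (of_int :: int \<Rightarrow> 'a::comm_ring_1) (kron_mat A B) =
    kron_mat (map_mat of_int A) (map_mat of_int B)"
  by (rule eq_matI) (auto simp: kron_mat_def div_mod_less_of_less_mult)

lemma int_mat_eigenvalue_imp_algebraic_int:
  fixes A :: "int mat" and x :: "'a::field_char_0"
  assumes "A \<in> carrier_mat n n" and "eigenvalue (map_mat of_int A) x"
  shows "algebraic_int x"
proof -
  have "poly (char_poly (map_mat of_int A)) x = 0"
    using assms eigenvalue_root_char_poly[of "map_mat of_int A" n] by auto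
  then have "poly (of_int_poly (char_poly A)) x = 0"
    by (simp add: of_int_hom.char_poly_hom[OF assms(1)])
  moreover have "lead_coeff (char_poly A) = 1"
    using degree_monic_char_poly[OF assms(1)] by simp
  ultimately show ?thesis
    using algebraic_int_altdef_ipoly by blast
qed

lemma monic_root_top_power:
  fixes P :: "int poly" and x :: "'a::field_char_0"
  assumes "lead_coeff P = 1" and "poly (of_int_poly P) x = 0"
  shows "x ^ degree P = - (\<Sum>j<degree P. of_int (coeff P j) * x ^ j)"
proof -
  have "0 = (\<Sum>j\<le>degree P. of_int (coeff P j) * x ^ j)"
    using assms(2) by (simp add: poly_altdef)
  also have "\<dots> = (\<Sum>j<degree P. of_int (coeff P j) * x ^ j) + x ^ degree P"
    using assms(1) by (simp add: lessThan_Suc_atMost[symmetric])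
  finally show ?thesis
    by (simp add: eq_neg_iff_add_eq_0 add.commute)
qed

definition companion_mat :: "int poly \<Rightarrow> int mat" where
  "companion_mat P = mat (degree P) (degree P)
     (\<lambda>(i, j). if Suc i < degree P then (if j = Suc i then 1 else 0) else - coeff P j)"

lemma companion_mat_mult_powers:
  fixes P :: "int poly" and x :: "'a::field_char_0"
  assumes "lead_coeff P = 1" and "poly (of_int_poly P) x = 0"
  shows "map_mat of_int (companion_mat P) *\<^sub>v vec (degree P) (\<lambda>i. x ^ i) =
    x \<cdot>\<^sub>v vec (degree P) (\<lambda>i. x ^ i)"
proof (rule eq_vecI)
  define d where "d = degree P"
  fix i assume "i < dim_vec (x \<cdot>\<^sub>v vec (degree P) (\<lambda>i. x ^ i))"
  then have i: "i < d" by (simp add: d_def)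
  have top: "x ^ d = - (\<Sum>j<d. of_int (coeff P j) * x ^ j)"
    unfolding d_def using assms by (rule monic_root_top_power)
  have "(map_mat of_int (companion_mat P) *\<^sub>v vec d (\<lambda>i. x ^ i)) $ i =
      (\<Sum>j<d. of_int (companion_mat P $$ (i, j)) * x ^ j)"
    using i by (simp add: companion_mat_def d_def scalar_prod_def atLeast0LessThan)
  also have "\<dots> = x ^ Suc i"
  proof (cases "Suc i < d")
    case True
    then have "(\<Sum>j<d. of_int (companion_mat P $$ (i, j)) * x ^ j) =
        (\<Sum>j<d. if j = Suc i then x ^ j else 0)"
      using i by (intro sum.cong) (auto simp: companion_mat_def d_def)
    then show ?thesis
      using True by simp
  next
    case False
    then have "Suc i = d" using i by simp
    then show ?thesis
      using i top by (simp add: companion_mat_def d_def sum_negf del: power_Suc)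
  qed
  finally show "(map_mat of_int (companion_mat P) *\<^sub>v vec (degree P) (\<lambda>i. x ^ i)) $ i =
      (x \<cdot>\<^sub>v vec (degree P) (\<lambda>i. x ^ i)) $ i"
    using i by (simp add: d_def)
qed (simp add: companion_mat_def)

lemma algebraic_int_imp_int_mat_eigenvector:
  fixes x :: "'a::field_char_0"
  assumes "algebraic_int x"
  obtains n and A :: "int mat" and u
  where "A \<in> carrier_mat n n" and "eigenvector (map_mat of_int A) u x"
proof -
  obtain P where P: "poly (of_int_poly P) x = 0" "lead_coeff P = 1"
    using assms algebraic_int_altdef_ipoly by blast
  have "degree P \<noteq> 0"
    using P monic_degree_0[of P] by auto
  then have "vec (degree P) (\<lambda>i. x ^ i) \<noteq> 0\<^sub>v (degree P)"
    by (metis index_vec index_zero_vec(1) neq0_conv one_neq_zero power_0)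
  show thesis
  proof (rule that)
    show "companion_mat P \<in> carrier_mat (degree P) (degree P)"
      by (simp add: companion_mat_def)
    show "eigenvector (map_mat of_int (companion_mat P)) (vec (degree P) (\<lambda>i. x ^ i)) x"
      using companion_mat_mult_powers[OF P(2,1)] \<open>vec (degree P) (\<lambda>i. x ^ i) \<noteq> 0\<^sub>v (degree P)\<close>
      by (simp add: eigenvector_def companion_mat_def)
  qed
qed

lemma algebraic_int_common_eigenvector:
  fixes x y :: "'a::field_char_0"
  assumes "algebraic_int x" and "algebraic_int y"
  obtains n and A B :: "int mat" and v where "A \<in> carrier_mat n n" and "B \<in> carrier_mat n n"
    and "eigenvector (map_mat of_int A) v x" and "eigenvector (map_mat of_int B) v y"
proof -
  obtain d A u where A: "A \<in> carrier_mat d d" and "eigenvector (map_mat of_int A) u x"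
    using algebraic_int_imp_int_mat_eigenvector[OF assms(1)] .
  then have u: "u \<in> carrier_vec d" "u \<noteq> 0\<^sub>v d" "map_mat of_int A *\<^sub>v u = x \<cdot>\<^sub>v u"
    by (auto simp: eigenvector_def)
  obtain e B w where B: "B \<in> carrier_mat e e" and "eigenvector (map_mat of_int B) w y"
    using algebraic_int_imp_int_mat_eigenvector[OF assms(2)] .
  then have w: "w \<in> carrier_vec e" "w \<noteq> 0\<^sub>v e" "map_mat of_int B *\<^sub>v w = y \<cdot>\<^sub>v w"
    by (auto simp: eigenvector_def)
  define v where "v = kron_vec u w"
  have Ax: "map_mat of_int (kron_mat A (1\<^sub>m e)) *\<^sub>v v = x \<cdot>\<^sub>v v"
    using A u w by (simp add: v_def of_int_kron_mat of_int_hom.mat_hom_one kron_mult_mat_vec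
        kron_vec_smult_left)
  have By: "map_mat of_int (kron_mat (1\<^sub>m d) B) *\<^sub>v v = y \<cdot>\<^sub>v v"
    using B u w by (simp add: v_def of_int_kron_mat of_int_hom.mat_hom_one kron_mult_mat_vec
        kron_vec_smult_right)
  have v: "v \<in> carrier_vec (d * e)" "v \<noteq> 0\<^sub>v (d * e)"
    using u w kron_vec_nonzero[of u d w e] by (auto simp: v_def kron_vec_def)
  show thesis
  proof (rule that)
    show "kron_mat A (1\<^sub>m e) \<in> carrier_mat (d * e) (d * e)"
      and "kron_mat (1\<^sub>m d) B \<in> carrier_mat (d * e) (d * e)"
      using A B by (auto intro: kron_mat_carrier)
    then show "eigenvector (map_mat of_int (kron_mat A (1\<^sub>m e))) v x"
      "eigenvector (map_mat of_int (kron_mat (1\<^sub>m d) B)) v y"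
      using Ax By v by (auto simp: eigenvector_def)
  qed
qed

lemma algebraic_int_plus [intro]:
  fixes x y :: "'a::field_char_0"
  assumes "algebraic_int x" and "algebraic_int y"
  shows "algebraic_int (x + y)"
proof -
  obtain n A B v where A: "A \<in> carrier_mat n n" and B: "B \<in> carrier_mat n n"
    and "eigenvector (map_mat of_int A) v x" and "eigenvector (map_mat of_int B) v y"
    using algebraic_int_common_eigenvector[OF assms] .
  then have v: "v \<in> carrier_vec n" "v \<noteq> 0\<^sub>v n"
    and Av: "map_mat of_int A *\<^sub>v v = x \<cdot>\<^sub>v v" and Bv: "map_mat of_int B *\<^sub>v v = y \<cdot>\<^sub>v v"
    by (auto simp: eigenvector_def)
  have "map_mat of_int (A + B) = map_mat of_int A + (map_mat of_int B :: 'a mat)"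
    using A B by (intro eq_matI) auto
  then have "map_mat of_int (A + B) *\<^sub>v v = map_mat of_int A *\<^sub>v v + map_mat of_int B *\<^sub>v v"
    using A B v by (simp add: add_mult_distrib_mat_vec[of _ n n])
  also have "\<dots> = (x + y) \<cdot>\<^sub>v v"
    by (simp add: Av Bv add_smult_distrib_vec)
  finally have "eigenvalue (map_mat of_int (A + B)) (x + y)"
    using A B v unfolding eigenvalue_def eigenvector_def by auto
  then show ?thesis
    using A B by (intro int_mat_eigenvalue_imp_algebraic_int[of "A + B" n]) auto
qed

lemma algebraic_int_times [intro]:
  fixes x y :: "'a::field_char_0"
  assumes "algebraic_int x" and "algebraic_int y"
  shows "algebraic_int (x * y)"
proof -
  obtain n A B v where A: "A \<in> carrier_mat n n" and B: "B \<in> carrier_mat n n"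
    and "eigenvector (map_mat of_int A) v x" and "eigenvector (map_mat of_int B) v y"
    using algebraic_int_common_eigenvector[OF assms] .
  then have v: "v \<in> carrier_vec n" "v \<noteq> 0\<^sub>v n"
    and Av: "map_mat of_int A *\<^sub>v v = x \<cdot>\<^sub>v v" and Bv: "map_mat of_int B *\<^sub>v v = y \<cdot>\<^sub>v v"
    by (auto simp: eigenvector_def)
  have "map_mat of_int (A * B) *\<^sub>v v = map_mat of_int A *\<^sub>v (y \<cdot>\<^sub>v v)"
    using A B v by (simp add: of_int_hom.mat_hom_mult[OF A B] assoc_mult_mat_vec[of _ n n _ n] Bv)
  also have "\<dots> = (x * y) \<cdot>\<^sub>v v"
    using A v by (simp add: mult_mat_vec[of _ n n] Av smult_smult_assoc mult.commute)
  finally have "eigenvalue (map_mat of_int (A * B)) (x * y)"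
    using A v unfolding eigenvalue_def eigenvector_def by auto
  then show ?thesis
    using A B by (intro int_mat_eigenvalue_imp_algebraic_int[of "A * B" n]) auto
qed

lemma algebraic_int_power [intro]: "algebraic_int (x :: 'a::field_char_0) \<Longrightarrow> algebraic_int (x ^ k)"
  by (induction k) auto

lemma algebraic_int_diff [intro]:
  fixes x y :: "'a::field_char_0"
  shows "algebraic_int x \<Longrightarrow> algebraic_int y \<Longrightarrow> algebraic_int (x - y)"
  unfolding diff_conv_add_uminus by (intro algebraic_int_plus algebraic_int_minus)

section \<open>Products of linear factors and power sums of their roots\<close>

lemma lead_coeff_linear_factors: "lead_coeff (\<Prod>a\<leftarrow>as. [:- a, 1:]) = 1"
  for as :: "'a::idom list"
  by (induction as) (simp_all del: mult_pCons_left add: lead_coeff_mult)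

lemma degree_linear_factors: "degree (\<Prod>a\<leftarrow>as. [:- a, 1:]) = length as"
  for as :: "'a::idom list"
proof (induction as)
  case (Cons a as)
  have "(\<Prod>a\<leftarrow>as. [:- a, 1:]) \<noteq> 0"
    using lead_coeff_linear_factors[of as] by auto
  with Cons show ?case
    by (simp del: mult_pCons_left add: degree_mult_eq)
qed simp

lemma poly_linear_factors: "poly (\<Prod>a\<leftarrow>as. [:- a, 1:]) z = (\<Prod>a\<leftarrow>as. z - a)"
  for z :: "'a::comm_ring_1"
  by (induction as) (auto simp: algebra_simps)

lemma poly_linear_factors_eq_0_iff: "poly (\<Prod>a\<leftarrow>as. [:- a, 1:]) z = 0 \<longleftrightarrow> z \<in> set as"
  for z :: "'a::idom"
  by (induction as) auto

lemma const_coeff_linear_factors: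
  fixes P :: "int poly" and as :: "'a::comm_ring_1 list"
  assumes "of_int_poly P = (\<Prod>a\<leftarrow>as. [:- a, 1:])"
  shows "of_int (coeff P 0) = (\<Prod>a\<leftarrow>as. - a)"
proof -
  have "of_int (coeff P 0) = poly (of_int_poly P) (0 :: 'a)"
    by (simp add: poly_0_coeff_0)
  also have "\<dots> = (\<Prod>a\<leftarrow>as. 0 - a)"
    by (simp only: assms poly_linear_factors)
  finally show ?thesis
    by simp
qed

lemma algebraic_int_coeff_linear_factors:
  fixes as :: "'a::field_char_0 list"
  assumes "\<forall>a\<in>set as. algebraic_int a"
  shows "algebraic_int (coeff (\<Prod>a\<leftarrow>as. [:- a, 1:]) i)"
  using assms
proof (induction as arbitrary: i)
  case (Cons a as)
  then show ?case
    by (cases i) (auto simp: coeff_pCons)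
qed (simp add: coeff_1)

lemma simple_root_not_in_other_factors:
  fixes z :: "'a::idom"
  assumes "poly (pderiv ([:- z, 1:] * (\<Prod>a\<leftarrow>as. [:- a, 1:]))) z \<noteq> 0"
  shows "z \<notin> set as"
proof
  assume "z \<in> set as"
  then have "poly (\<Prod>a\<leftarrow>as. [:- a, 1:]) z = 0"
    by (simp add: poly_linear_factors_eq_0_iff)
  then obtain q where q: "(\<Prod>a\<leftarrow>as. [:- a, 1:]) = [:- z, 1:] * q"
    by (auto simp: poly_eq_0_iff_dvd elim: dvdE)
  have "[:- z, 1:] * (\<Prod>a\<leftarrow>as. [:- a, 1:]) = [:- z, 1:] ^ Suc (Suc 0) * q"
    unfolding q by (simp only: power_Suc power_0 mult_1_right mult.assoc)
  with assms show False
    by (simp only: lemma_order_pderiv1) simp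
qed

lemma linear_factors_split_off_two:
  fixes as :: "'a::comm_ring_1 list"
  assumes "a \<in> set as" and "b \<in> set as" and "a \<noteq> b"
  obtains rest where "(\<Prod>x\<leftarrow>as. [:- x, 1:]) = [:- a, 1:] * ([:- b, 1:] * (\<Prod>x\<leftarrow>rest. [:- x, 1:]))"
    and "set rest \<subseteq> set as"
proof
  have "b \<in> set (remove1 a as)"
    using assms by (simp add: in_set_remove1)
  then show "(\<Prod>x\<leftarrow>as. [:- x, 1:]) =
      [:- a, 1:] * ([:- b, 1:] * (\<Prod>x\<leftarrow>remove1 b (remove1 a as). [:- x, 1:]))"
    using prod_list_map_remove1[OF assms(1), where f = "\<lambda>x. [:- x, 1:]"]
      prod_list_map_remove1[OF \<open>b \<in> set (remove1 a as)\<close>, where f = "\<lambda>x. [:- x, 1:]"]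
    by (simp del: mult_pCons_left)
  show "set (remove1 b (remove1 a as)) \<subseteq> set as"
    by (meson set_remove1_subset subset_trans)
qed

lemma eq_if_dvd_diff_small_coeffs:
  fixes P R S :: "'a::idom poly"
  assumes "P dvd R - S" and "\<forall>i\<ge>degree P. coeff R i = 0" and "\<forall>i\<ge>degree P. coeff S i = 0"
  shows "R = S"
proof (rule ccontr)
  assume "R \<noteq> S"
  then have "degree P \<le> degree (R - S)"
    using dvd_imp_degree_le[OF assms(1)] by simp
  then have "lead_coeff (R - S) = 0"
    using assms(2,3) by simp
  then show False
    using \<open>R \<noteq> S\<close> leading_coeff_0_iff right_minus_eq by blast
qed

text \<open>Modulo \<open>P = \<Prod>(X - a)\<close>, one has \<open>X^k P' \<equiv> \<Sum>\<^sub>a a^k \<Prod>\<^sub>b\<^sub>\<noteq>\<^sub>a (X - b)\<close>, a polynomial of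
  degree below \<open>deg P\<close> whose top coefficient is the power sum.\<close>
lemma linear_factors_power_sum_remainder:
  fixes as :: "'a::idom list"
  obtains R where "\<forall>i\<ge>length as. coeff R i = 0" and "coeff R (length as - 1) = (\<Sum>a\<leftarrow>as. a ^ k)"
    and "(\<Prod>a\<leftarrow>as. [:- a, 1:]) dvd monom 1 k * pderiv (\<Prod>a\<leftarrow>as. [:- a, 1:]) - R"
proof (induction as arbitrary: thesis)
  case Nil
  show ?case
    by (rule Nil.prems[of 0]) simp_all
next
  case (Cons a as)
  let ?P = "\<Prod>a\<leftarrow>as. [:- a, 1:]" and ?n = "length as"
  obtain R where R_coeff: "\<forall>i\<ge>?n. coeff R i = 0" and R_top: "coeff R (?n - 1) = (\<Sum>a\<leftarrow>as. a ^ k)"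
    and R_dvd: "?P dvd monom 1 k * pderiv ?P - R"
    using Cons.IH by blast
  define R' where "R' = [:a ^ k:] * ?P + [:- a, 1:] * R"
  have lin: "[:- a, 1:] * Q = Polynomial.smult (- a) Q + pCons 0 Q" for Q :: "'a poly"
    by (simp add: mult_pCons_left)
  have P_top: "coeff ?P ?n = 1" and P_above: "\<And>i. i > ?n \<Longrightarrow> coeff ?P i = 0"
    using lead_coeff_linear_factors[of as] degree_linear_factors[of as] by (auto simp: coeff_eq_0)
  have "\<forall>i\<ge>Suc ?n. coeff R' i = 0"
    using R_coeff P_above by (auto simp: R'_def lin coeff_pCons split: nat.split)
  moreover have "coeff R' (Suc ?n - 1) = (\<Sum>a\<leftarrow>a # as. a ^ k)"
    using R_coeff R_top P_top by (cases ?n) (simp_all add: R'_def lin)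
  moreover have "(\<Prod>a\<leftarrow>a # as. [:- a, 1:]) dvd monom 1 k * pderiv (\<Prod>a\<leftarrow>a # as. [:- a, 1:]) - R'"
  proof -
    have "poly (monom 1 k - [:a ^ k:]) a = 0"
      by (simp add: poly_monom)
    then have root: "[:- a, 1:] dvd monom 1 k - [:a ^ k:]"
      using poly_eq_0_iff_dvd by blast
    have pd: "pderiv (\<Prod>a\<leftarrow>a # as. [:- a, 1:]) = [:- a, 1:] * pderiv ?P + ?P"
      by (simp del: mult_pCons_left add: pderiv_mult pderiv_pCons)
    have ring_identity: "m * (L * D + Q) - (c * Q + L * S) = L * (m * D - S) + (m - c) * Q"
      for m L D Q c S :: "'a poly"
      by (simp add: algebra_simps)
    have "monom 1 k * pderiv (\<Prod>a\<leftarrow>a # as. [:- a, 1:]) - R' =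
        [:- a, 1:] * (monom 1 k * pderiv ?P - R) + (monom 1 k - [:a ^ k:]) * ?P"
      unfolding pd R'_def by (rule ring_identity)
    also have "(\<Prod>a\<leftarrow>a # as. [:- a, 1:]) dvd \<dots>"
      unfolding prod_list.Cons list.map
      by (intro dvd_add mult_dvd_mono R_dvd root dvd_refl)
    finally show ?thesis .
  qed
  ultimately show ?case
    using Cons.prems by simp
qed

text \<open>As \<open>P\<close> is monic, dividing \<open>X^k P'\<close> by \<open>P\<close> over \<open>\<int>\<close> yields the remainder of the
  previous lemma, which therefore has integer coefficients.\<close>
lemma power_sum_roots_Ints:
  fixes P :: "int poly" and as :: "'a::field_char_0 list"
  assumes P: "of_int_poly P = (\<Prod>a\<leftarrow>as. [:- a, 1:])"
  shows "(\<Sum>a\<leftarrow>as. a ^ k) \<in> \<int>"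
proof -
  let ?C = "of_int_poly :: int poly \<Rightarrow> 'a poly" and ?n = "length as"
  have degP: "degree P = ?n"
    using arg_cong[OF P, of degree] by (simp add: degree_linear_factors)
  have "of_int (lead_coeff P) = (1 :: 'a)"
    using arg_cong[OF P, of lead_coeff] by (simp add: lead_coeff_linear_factors)
  then have monic: "lead_coeff P = 1"
    by simp
  obtain R where R_small: "\<forall>i\<ge>?n. coeff R i = 0" and R_top: "coeff R (?n - 1) = (\<Sum>a\<leftarrow>as. a ^ k)"
    and R_dvd: "?C P dvd monom 1 k * pderiv (?C P) - R"
    using linear_factors_power_sum_remainder[of as k] unfolding P by blast
  obtain q r where qr: "pseudo_divmod (monom 1 k * pderiv P) P = (q, r)"
    by (cases "pseudo_divmod (monom 1 k * pderiv P) P")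
  have "P \<noteq> 0"
    using monic by auto
  from pseudo_divmod[OF this qr] monic
  have div: "monom 1 k * pderiv P = P * q + r" and r_small: "r = 0 \<or> degree r < ?n"
    unfolding degP[symmetric] by auto
  have "monom 1 k * pderiv (?C P) = ?C P * ?C q + ?C r"
    using arg_cong[OF div, of ?C]
    by (simp only: of_int_hom.map_poly_pderiv[symmetric] of_int_poly_hom.hom_mult
        of_int_poly_hom.hom_add) (simp add: map_poly_monom)
  then have quot: "monom 1 k * pderiv (?C P) - ?C r = ?C P * ?C q"
    by simp
  have "?C P dvd (monom 1 k * pderiv (?C P) - ?C r) - (monom 1 k * pderiv (?C P) - R)"
    unfolding quot by (rule dvd_diff[OF dvd_triv_left R_dvd])
  then have dvd: "?C P dvd R - ?C r"
    by (simp add: algebra_simps)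
  have "R = ?C r"
    using dvd R_small r_small degP by (intro eq_if_dvd_diff_small_coeffs) (auto simp: coeff_eq_0)
  then show ?thesis
    using R_top by (metis Ints_of_int of_int_hom.coeff_map_poly_hom)
qed

section \<open>Rational minimal polynomials\<close>

interpretation of_rat_poly_hom: map_poly_inj_idom_divide_hom "of_rat :: rat \<Rightarrow> 'a::field_char_0" ..

abbreviation qpoly :: "rat poly \<Rightarrow> 'a::field_char_0 \<Rightarrow> 'a" where
  "qpoly p x \<equiv> poly (map_poly of_rat p) x"

definition min_rat_poly :: "'a::field_char_0 \<Rightarrow> rat poly \<Rightarrow> bool" where
  "min_rat_poly x p \<longleftrightarrow> lead_coeff p = 1 \<and> qpoly p x = 0 \<and>
     (\<forall>q. q \<noteq> 0 \<longrightarrow> qpoly q x = 0 \<longrightarrow> degree p \<le> degree q)"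

lemma cnj_of_rat [simp]: "cnj (of_rat r) = of_rat r"
proof -
  obtain a b where "quotient_of r = (a, b)"
    by fastforce
  then have "r = of_int a / of_int b"
    by (rule quotient_of_div)
  then show ?thesis
    by (simp add: of_rat_divide)
qed

lemma qpoly_cnj: "qpoly p (cnj z) = cnj (qpoly p z)"
  by (simp add: poly_altdef)

lemma min_rat_poly_exists:
  fixes \<theta> :: complex
  assumes "algebraic_int \<theta>"
  obtains p where "min_rat_poly \<theta> p" and "degree p = alg_degree \<theta>"
proof -
  obtain Q :: "int poly" where Q: "poly (of_int_poly Q) \<theta> = 0" "lead_coeff Q = 1"
    using assms algebraic_int_altdef_ipoly by blast
  have "of_int_poly Q \<noteq> (0 :: rat poly)" "qpoly (of_int_poly Q) \<theta> = 0"
    using Q by (auto simp: map_poly_map_poly o_def)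
  then have "\<exists>n. \<exists>p :: rat poly. p \<noteq> 0 \<and> degree p = n \<and> qpoly p \<theta> = 0"
    by blast
  from LeastI_ex[OF this] obtain p0 :: "rat poly"
    where p0: "p0 \<noteq> 0" "degree p0 = alg_degree \<theta>" "qpoly p0 \<theta> = 0"
    unfolding alg_degree_def by blast
  have least: "q \<noteq> 0 \<Longrightarrow> qpoly q \<theta> = 0 \<Longrightarrow> alg_degree \<theta> \<le> degree q" for q :: "rat poly"
    unfolding alg_degree_def by (auto intro: Least_le)
  define p where "p = Polynomial.smult (inverse (lead_coeff p0)) p0"
  have "lead_coeff p0 \<noteq> 0"
    using p0(1) by simp
  then have "min_rat_poly \<theta> p"
    using p0 least by (auto simp: min_rat_poly_def p_def of_rat_hom.map_poly_hom_smult)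
  moreover have "degree p = alg_degree \<theta>"
    using p0(2) \<open>lead_coeff p0 \<noteq> 0\<close> by (simp add: p_def)
  ultimately show thesis
    using that by blast
qed

lemma min_rat_poly_degree_pos:
  assumes "min_rat_poly x p"
  shows "degree p > 0"
proof (rule ccontr)
  assume "\<not> degree p > 0"
  then have "p = 1"
    using assms monic_degree_0 unfolding min_rat_poly_def by blast
  then show False
    using assms unfolding min_rat_poly_def by simp
qed

lemma min_rat_poly_dvd:
  assumes p: "min_rat_poly x p" and q: "qpoly q x = 0"
  shows "p dvd q"
proof -
  have "p \<noteq> 0"
    using p by (auto simp: min_rat_poly_def)
  have "q = q div p * p + q mod p"
    by simp
  then have "qpoly q x = qpoly (q div p) x * qpoly p x + qpoly (q mod p) x"
    by (metis of_rat_poly_hom.hom_add of_rat_poly_hom.hom_mult poly_add poly_mult)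
  then have "qpoly (q mod p) x = 0"
    using p q by (simp add: min_rat_poly_def)
  moreover have "q mod p \<noteq> 0 \<Longrightarrow> degree (q mod p) < degree p"
    using degree_mod_less' \<open>p \<noteq> 0\<close> by blast
  ultimately have "q mod p = 0"
    using p unfolding min_rat_poly_def by (meson leD)
  then show ?thesis
    by (rule mod_0_imp_dvd)
qed

lemma min_rat_poly_irreducible:
  assumes p: "min_rat_poly x p"
  shows "irreducible p"
proof (rule irreducibleI)
  show p0: "p \<noteq> 0"
    using p by (auto simp: min_rat_poly_def)
  then show "\<not> p dvd 1"
    using min_rat_poly_degree_pos[OF p] is_unit_iff_degree by simp
  fix a b assume ab: "p = a * b"
  then have "a \<noteq> 0" "b \<noteq> 0" and deg: "degree p = degree a + degree b"
    using p0 by (auto simp: degree_mult_eq)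
  have "qpoly a x = 0 \<or> qpoly b x = 0"
    using p ab by (simp add: min_rat_poly_def of_rat_poly_hom.hom_mult)
  then have "degree p \<le> degree a \<or> degree p \<le> degree b"
    using p \<open>a \<noteq> 0\<close> \<open>b \<noteq> 0\<close> unfolding min_rat_poly_def by blast
  then have "degree b = 0 \<or> degree a = 0"
    using deg by linarith
  then show "a dvd 1 \<or> b dvd 1"
    using is_unit_iff_degree \<open>a \<noteq> 0\<close> \<open>b \<noteq> 0\<close> by blast
qed

lemma min_rat_poly_pderiv_nonzero:
  assumes p: "min_rat_poly x p"
  shows "qpoly (pderiv p) x \<noteq> 0"
proof
  assume "qpoly (pderiv p) x = 0"
  moreover have "pderiv p \<noteq> 0"
    using min_rat_poly_degree_pos[OF p] pderiv_eq_0_iff[of p] by simp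
  ultimately have "degree p \<le> degree (pderiv p)"
    using p unfolding min_rat_poly_def by blast
  then show False
    using min_rat_poly_degree_pos[OF p] degree_pderiv[of p] by simp
qed

lemma min_rat_poly_coeff_0:
  assumes p: "min_rat_poly x p" and "x \<noteq> 0"
  shows "coeff p 0 \<noteq> 0"
proof
  assume "coeff p 0 = 0"
  then have "[:0, 1:] dvd p"
    using poly_eq_0_iff_dvd[of p 0] by (simp add: poly_0_coeff_0)
  then obtain p1 where p1: "p = [:0, 1:] * p1" ..
  then have "p1 \<noteq> 0" and deg: "degree p = Suc (degree p1)"
    using p by (auto simp: min_rat_poly_def degree_mult_eq)
  have "qpoly p x = x * qpoly p1 x"
    unfolding p1 of_rat_poly_hom.hom_mult poly_mult by simp
  then have "qpoly p1 x = 0"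
    using p \<open>x \<noteq> 0\<close> by (simp add: min_rat_poly_def)
  then have "degree p \<le> degree p1"
    using p \<open>p1 \<noteq> 0\<close> unfolding min_rat_poly_def by blast
  then show False
    using deg by simp
qed

lemma min_rat_poly_linear_factors:
  fixes x :: complex
  assumes "min_rat_poly x p"
  obtains as where "(map_poly of_rat p :: complex poly) = (\<Prod>a\<leftarrow>as. [:- a, 1:])"
proof -
  obtain as where "Polynomial.smult (lead_coeff (map_poly of_rat p)) (\<Prod>a\<leftarrow>as. [:- a, 1:]) =
      (map_poly of_rat p :: complex poly)"
    using fundamental_theorem_algebra_factorized by blast
  moreover have "lead_coeff (map_poly of_rat p :: complex poly) = 1"
    using assms by (simp add: min_rat_poly_def)
  ultimately have "(map_poly of_rat p :: complex poly) = (\<Prod>a\<leftarrow>as. [:- a, 1:])"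
    by simp
  then show thesis
    by (rule that)
qed

lemma min_rat_poly_root_galois_conjugate:
  fixes \<theta> z :: complex
  assumes p: "min_rat_poly \<theta> p" and "qpoly p z = 0"
  shows "z \<in> galois_conjugates \<theta>"
proof -
  have "p \<noteq> 0"
    using min_rat_poly_irreducible[OF p] by auto
  then show ?thesis
    using assms min_rat_poly_irreducible[OF p] unfolding galois_conjugates_def min_rat_poly_def
    by blast
qed

lemma min_rat_poly_root_algebraic_int:
  fixes x z :: complex
  assumes x: "algebraic_int x" and p: "min_rat_poly x p" and z: "qpoly p z = 0"
  shows "algebraic_int z"
proof -
  obtain Q :: "int poly" where Q: "poly (of_int_poly Q) x = 0" "lead_coeff Q = 1"
    using x algebraic_int_altdef_ipoly by blast
  have of_rat_Q: "map_poly of_rat (of_int_poly Q) = (of_int_poly Q :: complex poly)"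
    by (simp add: map_poly_map_poly o_def)
  then have "p dvd of_int_poly Q"
    using Q(1) by (intro min_rat_poly_dvd[OF p]) simp
  then obtain k where "of_int_poly Q = p * k" ..
  then have "of_int_poly Q = map_poly of_rat p * (map_poly of_rat k :: complex poly)"
    by (metis of_rat_Q of_rat_poly_hom.hom_mult)
  then have "poly (of_int_poly Q) z = 0"
    using z by simp
  then show ?thesis
    using Q(2) algebraic_int_altdef_ipoly by blast
qed

lemma rat_poly_int_if_algebraic_int_coeffs:
  assumes "\<And>i. algebraic_int (of_rat (coeff p i) :: complex)"
  obtains P :: "int poly" where "of_int_poly P = p"
proof
  show "of_int_poly (map_poly floor p) = p"
  proof (rule poly_eqI)
    fix i
    have "(of_rat (coeff p i) :: complex) \<in> \<int>"
      using assms by (simp add: rational_algebraic_int_is_int)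
    then obtain m where "(of_rat (coeff p i) :: complex) = of_int m"
      by (auto elim: Ints_cases)
    then have "coeff p i = of_int m"
      by (metis of_rat_eq_iff of_rat_of_int_eq)
    then show "coeff (of_int_poly (map_poly floor p)) i = coeff p i"
      by (simp add: coeff_map_poly)
  qed
qed

text \<open>Gauss's lemma: the coefficients of the minimal polynomial are symmetric functions of its
  roots, which are algebraic integers.\<close>
lemma min_rat_poly_int:
  fixes x :: complex
  assumes x: "algebraic_int x" and p: "min_rat_poly x p"
  obtains P :: "int poly" where "of_int_poly P = p"
proof (rule rat_poly_int_if_algebraic_int_coeffs)
  obtain as where as: "(map_poly of_rat p :: complex poly) = (\<Prod>a\<leftarrow>as. [:- a, 1:])"
    using min_rat_poly_linear_factors[OF p] .
  have "\<forall>a\<in>set as. algebraic_int a"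
    using min_rat_poly_root_algebraic_int[OF x p] by (simp add: as poly_linear_factors_eq_0_iff)
  then show "algebraic_int (of_rat (coeff p i) :: complex)" for i
    using algebraic_int_coeff_linear_factors[of as i] by (simp add: as[symmetric])
qed (rule that)

section \<open>Complex Pisot numbers\<close>

lemma norm_prod_list_le_one:
  fixes xs :: "'a::real_normed_div_algebra list"
  assumes "\<forall>x\<in>set xs. norm x \<le> 1"
  shows "norm (prod_list xs) \<le> 1"
  using assms by (induction xs) (auto simp: norm_mult intro: mult_le_one)

lemma complex_pisot_factorization:
  assumes "complex_pisot \<theta>"
  obtains P :: "int poly" and rest where
    "of_int_poly P = (\<Prod>a\<leftarrow>\<theta> # cnj \<theta> # rest. [:- a, 1:])"
    and "degree P = alg_degree \<theta>" and "coeff P 0 \<noteq> 0" and "\<forall>w\<in>set rest. cmod w < 1"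
proof -
  have ai: "algebraic_int \<theta>" and "Im \<theta> \<noteq> 0" and "\<theta> \<noteq> 0"
    and small: "\<forall>z \<in> galois_conjugates \<theta> - {\<theta>, cnj \<theta>}. cmod z < 1"
    using assms unfolding complex_pisot_def by auto
  obtain p where p: "min_rat_poly \<theta> p" and deg: "degree p = alg_degree \<theta>"
    using min_rat_poly_exists[OF ai] .
  obtain P where P: "of_int_poly P = p"
    using min_rat_poly_int[OF ai p] .
  define PC :: "complex poly" where "PC = of_int_poly P"
  have PC: "PC = map_poly of_rat p"
    by (simp add: PC_def P[symmetric] map_poly_map_poly o_def)
  obtain as where "(map_poly of_rat p :: complex poly) = (\<Prod>a\<leftarrow>as. [:- a, 1:])"
    using min_rat_poly_linear_factors[OF p] .
  then have as: "PC = (\<Prod>a\<leftarrow>as. [:- a, 1:])"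
    by (simp only: PC)
  have roots: "z \<in> set as \<longleftrightarrow> qpoly p z = 0" for z
    by (simp add: PC[symmetric] as poly_linear_factors_eq_0_iff)
  have "\<theta> \<in> set as" and "cnj \<theta> \<in> set as" and "\<theta> \<noteq> cnj \<theta>"
    using p \<open>Im \<theta> \<noteq> 0\<close> by (auto simp: roots qpoly_cnj min_rat_poly_def complex_eq_iff)
  then obtain rest where fac: "PC = [:- \<theta>, 1:] * ([:- cnj \<theta>, 1:] * (\<Prod>a\<leftarrow>rest. [:- a, 1:]))"
    and "set rest \<subseteq> set as"
    unfolding as by (rule linear_factors_split_off_two)
  have "poly (pderiv PC) z \<noteq> 0" if "z \<in> {\<theta>, cnj \<theta>}" for z
    using that min_rat_poly_pderiv_nonzero[OF p] qpoly_cnj[of "pderiv p" \<theta>]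
    by (auto simp: PC of_rat_hom.map_poly_pderiv)
  moreover have PC_\<theta>: "PC = [:- \<theta>, 1:] * (\<Prod>a\<leftarrow>cnj \<theta> # rest. [:- a, 1:])"
    and PC_cnj: "PC = [:- cnj \<theta>, 1:] * (\<Prod>a\<leftarrow>\<theta> # rest. [:- a, 1:])"
    unfolding fac by (simp_all only: list.map prod_list.Cons mult.left_commute)
  ultimately have "\<theta> \<notin> set (cnj \<theta> # rest)" and "cnj \<theta> \<notin> set (\<theta> # rest)"
    by (metis insertI1 insertI2 simple_root_not_in_other_factors)+
  moreover have "z \<in> galois_conjugates \<theta>" if "z \<in> set rest" for z
  proof -
    have "z \<in> set as"
      using that \<open>set rest \<subseteq> set as\<close> by blast
    then show ?thesis
      using min_rat_poly_root_galois_conjugate[OF p] roots by blast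
  qed
  ultimately have "\<forall>w\<in>set rest. cmod w < 1"
    using small by auto
  moreover have "coeff P 0 \<noteq> 0"
    using min_rat_poly_coeff_0[OF p \<open>\<theta> \<noteq> 0\<close>] by (auto simp: P[symmetric])
  moreover have "degree P = alg_degree \<theta>"
    using deg by (simp add: P[symmetric])
  ultimately show thesis
    using that fac unfolding PC_def by (simp del: mult_pCons_left)
qed

lemma complex_pisot_const_coeff:
  fixes P :: "int poly"
  assumes "of_int_poly P = (\<Prod>a\<leftarrow>\<theta> # cnj \<theta> # rest. [:- a, 1:])"
  shows "of_int (coeff P 0) = of_real (cmod \<theta> ^ 2) * (\<Prod>w\<leftarrow>rest. - w)"
  using const_coeff_linear_factors[OF assms] complex_norm_square[of \<theta>]
  by (simp add: mult.assoc)

lemma complex_pisot_alg_degree_ge_3: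
  assumes "complex_pisot \<theta>" and "1 < cmod \<theta> ^ 2" and "cmod \<theta> ^ 2 < 2"
  shows "alg_degree \<theta> \<ge> 3"
proof -
  obtain P rest where fac: "of_int_poly P = (\<Prod>a\<leftarrow>\<theta> # cnj \<theta> # rest. [:- a, 1:])"
    and deg: "degree P = alg_degree \<theta>"
    using complex_pisot_factorization[OF assms(1)] by blast
  have "alg_degree \<theta> = length rest + 2"
    using arg_cong[OF fac, of degree] deg
    by (simp only: degree_linear_factors of_int_hom.degree_map_poly_hom) simp
  moreover have "rest \<noteq> []"
  proof
    assume "rest = []"
    then have "of_int (coeff P 0) = (of_real (cmod \<theta> ^ 2) :: complex)"
      using complex_pisot_const_coeff[OF fac] by simp
    then have "real_of_int (coeff P 0) = cmod \<theta> ^ 2"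
      by (metis of_real_eq_iff of_real_of_int_eq)
    then have "real_of_int 1 < of_int (coeff P 0)" and "real_of_int (coeff P 0) < of_int 2"
      using assms(2,3) by simp_all
    then show False
      unfolding of_int_less_iff by simp
  qed
  ultimately show ?thesis
    by (simp add: Suc_le_eq)
qed

lemma complex_pisot_algebraic_unit:
  assumes "complex_pisot \<theta>" and "cmod \<theta> ^ 2 < 2"
  shows "algebraic_unit \<theta>"
proof -
  obtain P rest where fac: "of_int_poly P = (\<Prod>a\<leftarrow>\<theta> # cnj \<theta> # rest. [:- a, 1:])"
    and "degree P = alg_degree \<theta>" and "coeff P 0 \<noteq> 0" and small: "\<forall>w\<in>set rest. cmod w < 1"
    by (rule complex_pisot_factorization[OF assms(1)])
  define c where "c = coeff P 0"
  have "\<bar>real_of_int c\<bar> = cmod (of_int c :: complex)"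
    by (simp only: norm_of_int)
  also have "\<dots> = cmod \<theta> ^ 2 * cmod (\<Prod>w\<leftarrow>rest. - w)"
    unfolding c_def complex_pisot_const_coeff[OF fac] norm_mult norm_of_real by simp
  also have "\<dots> \<le> cmod \<theta> ^ 2 * 1"
    using small by (intro mult_left_mono norm_prod_list_le_one) auto
  finally have "\<bar>c\<bar> < 2"
    using assms(2) by linarith
  moreover have "c \<noteq> 0"
    using \<open>coeff P 0 \<noteq> 0\<close> by (simp add: c_def)
  ultimately have "c = 1 \<or> c = -1"
    by linarith
  then have "c * c = 1"
    by auto
  have "poly (of_int_poly P) \<theta> = 0"
    unfolding fac by (simp only: poly_linear_factors_eq_0_iff list.set_intros)
  then have "algebraic_int (inverse \<theta>)"
    using \<open>c * c = 1\<close>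
    by (intro algebraic_int_inverse[of "of_int_poly (Polynomial.smult c P)"])
      (simp_all add: of_int_hom.map_poly_hom_smult c_def flip: of_int_mult)
  then show ?thesis
    using assms(1) by (simp add: algebraic_unit_def complex_pisot_def)
qed

lemma complex_pisot_trace_Ints:
  assumes "complex_pisot \<theta>"
  obtains s where "summable (\<lambda>k. cmod (s k))" and "\<And>k. \<theta> ^ k + cnj \<theta> ^ k + s k \<in> \<int>"
proof -
  obtain P rest where fac: "of_int_poly P = (\<Prod>a\<leftarrow>\<theta> # cnj \<theta> # rest. [:- a, 1:])"
    and "degree P = alg_degree \<theta>" and "coeff P 0 \<noteq> 0" and small: "\<forall>w\<in>set rest. cmod w < 1"
    by (rule complex_pisot_factorization[OF assms])
  define s where "s k = (\<Sum>i<length rest. (rest ! i) ^ k)" for k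
  have "(\<Sum>w\<leftarrow>rest. w ^ k) = s k" for k
    by (simp add: s_def sum_list_sum_nth atLeast0LessThan)
  then have "\<theta> ^ k + cnj \<theta> ^ k + s k \<in> \<int>" for k
    using power_sum_roots_Ints[OF fac, of k] by (simp add: add.assoc)
  moreover have "summable (\<lambda>k. cmod (s k))"
  proof (rule summable_comparison_test')
    show "summable (\<lambda>k. \<Sum>i<length rest. cmod (rest ! i) ^ k)"
      using small by (intro summable_sum summable_geometric) auto
    show "norm (cmod (s k)) \<le> (\<Sum>i<length rest. cmod (rest ! i) ^ k)" for k
      unfolding s_def by (simp add: norm_power order_trans[OF norm_sum])
  qed
  ultimately show thesis
    using that by blast
qed

section \<open>The Fourier transform along conjugate powers\<close>

lemma cos_two_pi_Re_nonzero:
  fixes x :: complex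
  assumes "algebraic_int x"
  shows "cos (2 * pi * Re x) \<noteq> 0"
proof
  assume "cos (2 * pi * Re x) = 0"
  then obtain i :: int where "odd i" and "2 * pi * Re x = of_int i * (pi / 2)"
    by (auto simp: cos_zero_iff_int)
  then have Re_x: "2 * Re x = of_int i / 2"
    by (simp add: field_simps)
  have "x + cnj x = of_real (2 * Re x)"
    by (rule complex_add_cnj)
  also have "\<dots> = of_int i / 2"
    unfolding Re_x by simp
  finally have "x + cnj x = of_int i / 2" .
  moreover have "algebraic_int (x + cnj x)"
    using assms by auto
  moreover have "(of_int i / 2 :: complex) \<in> \<rat>"
    by simp
  ultimately have "(of_int i / 2 :: complex) \<in> \<int>"
    by (metis rational_algebraic_int_is_int)
  then obtain m where "(of_int i / 2 :: complex) = of_int m"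
    by (auto elim: Ints_cases)
  then have "(of_int i :: complex) = of_int (2 * m)"
    by (simp add: field_simps)
  then have "i = 2 * m"
    using of_int_eq_iff by blast
  with \<open>odd i\<close> show False
    by simp
qed

lemma one_minus_cos_le_abs: "1 - cos y \<le> \<bar>y\<bar>" for y :: real
proof -
  have "1 - cos y = 2 * sin (y / 2) ^ 2"
    using cos_double_sin[of "y / 2"] by simp
  also have "\<dots> = 2 * (\<bar>sin (y / 2)\<bar> * \<bar>sin (y / 2)\<bar>)"
    by (simp add: power2_eq_square)
  also have "\<dots> \<le> 2 * (\<bar>sin (y / 2)\<bar> * 1)"
    by (intro mult_left_mono abs_sin_le_one) simp_all
  also have "\<dots> \<le> \<bar>y\<bar>"
    using abs_sin_x_le_abs_x[of "y / 2"] by simp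
  finally show ?thesis .
qed

text \<open>If \<open>2 Re z\<close> is an integer up to the error \<open>Re s\<close>, then
  \<open>cos (2 \<pi> Re z) = \<plusminus>cos (\<pi> Re s)\<close>.\<close>
lemma abs_cos_two_pi_Re_close_to_one:
  fixes z s :: complex
  assumes "z + cnj z + s \<in> \<int>"
  shows "\<bar>1 - \<bar>cos (2 * pi * Re z)\<bar>\<bar> \<le> pi * cmod s"
proof -
  obtain m where m: "z + cnj z + s = of_int m"
    using assms by (auto elim: Ints_cases)
  have "2 * Re z = of_int m - Re s"
    using arg_cong[OF m, of Re] by simp
  then have "2 * pi * Re z = pi * of_int m - pi * Re s"
    by (metis mult.assoc mult.commute right_diff_distrib)
  then have "\<bar>cos (2 * pi * Re z)\<bar> = \<bar>cos (pi * Re s)\<bar>"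
    by (simp add: cos_diff)
  then have "\<bar>1 - \<bar>cos (2 * pi * Re z)\<bar>\<bar> \<le> 1 - cos (pi * Re s)"
    using abs_cos_le_one[of "pi * Re s"] by linarith
  also have "\<dots> \<le> pi * \<bar>Re s\<bar>"
    using one_minus_cos_le_abs[of "pi * Re s"] by (simp add: abs_mult)
  also have "\<dots> \<le> pi * cmod s"
    by (simp add: abs_Re_le_cmod)
  finally show ?thesis .
qed

lemma convergent_prod_if_summable_abs_diff_1:
  fixes f :: "nat \<Rightarrow> real"
  shows "summable (\<lambda>n. \<bar>f n - 1\<bar>) \<Longrightarrow> convergent_prod f"
  by (intro abs_convergent_prod_imp_convergent_prod summable_imp_abs_convergent_prod) simp

lemma partial_products_bounded_away_from_0:
  fixes f :: "nat \<Rightarrow> real"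
  assumes "summable (\<lambda>n. \<bar>f n - 1\<bar>)" and "\<And>n. f n \<noteq> 0"
  obtains c where "c > 0" and "\<And>N. c \<le> \<bar>\<Prod>n<N. f n\<bar>"
proof -
  have "convergent_prod f"
    using assms(1) by (rule convergent_prod_if_summable_abs_diff_1)
  then have "(\<lambda>N. \<Prod>n<N. f n) \<longlonglongrightarrow> prodinf f" and "prodinf f \<noteq> 0"
    using assms(2) by (auto intro: has_prod_imp_tendsto' dest: prodinf_nonzero)
  then have "Bseq (\<lambda>N. inverse (\<Prod>n<N. f n))"
    by (rule Bfun_inverse)
  then obtain K where "K > 0" and K: "\<And>N. norm (inverse (\<Prod>n<N. f n)) \<le> K"
    by (auto elim: BseqE)
  show thesis
  proof (rule that)
    show "inverse K > 0"
      using \<open>K > 0\<close> by simp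
    show "inverse K \<le> \<bar>\<Prod>n<N. f n\<bar>" for N
      using K[of N] \<open>K > 0\<close> assms(2)
      by (simp add: norm_inverse inverse_le_imp_le abs_prod prod_pos)
  qed
qed

lemma convergent_prod_cos_two_pi_Re_powers:
  fixes lam :: complex
  assumes "algebraic_int lam" and "cmod lam < 1"
  shows "convergent_prod (\<lambda>j. cos (2 * pi * Re (lam ^ j)))"
    and "(\<Prod>j. cos (2 * pi * Re (lam ^ j))) \<noteq> 0"
proof -
  define g where "g j = cos (2 * pi * Re (lam ^ j))" for j
  have "\<bar>g j - 1\<bar> \<le> 2 * pi * cmod lam ^ j" for j
  proof -
    have "\<bar>g j - 1\<bar> = 1 - cos (2 * pi * Re (lam ^ j))"
      using cos_le_one[of "2 * pi * Re (lam ^ j)"] by (simp add: g_def)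
    also have "\<dots> \<le> 2 * pi * \<bar>Re (lam ^ j)\<bar>"
      using one_minus_cos_le_abs[of "2 * pi * Re (lam ^ j)"] by (simp add: abs_mult)
    also have "\<dots> \<le> 2 * pi * cmod lam ^ j"
      using abs_Re_le_cmod[of "lam ^ j"] by (simp add: norm_power)
    finally show ?thesis .
  qed
  then have "summable (\<lambda>j. \<bar>g j - 1\<bar>)"
    using assms(2)
    by (intro summable_comparison_test'[OF summable_mult[OF summable_geometric]]) auto
  moreover have "g j \<noteq> 0" for j
    using assms(1) by (simp add: g_def cos_two_pi_Re_nonzero algebraic_int_power)
  ultimately show "convergent_prod g" and "prodinf g \<noteq> 0"
    by (simp_all add: convergent_prod_if_summable_abs_diff_1 prodinf_nonzero)
qed

lemma complex_pisot_cos_products_bounded_below: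
  assumes "complex_pisot \<theta>"
  obtains c where "c > 0" and "\<And>N. c \<le> \<bar>\<Prod>k=1..N. cos (2 * pi * Re (\<theta> ^ k))\<bar>"
proof -
  obtain s where "summable (\<lambda>k. cmod (s k))" and s: "\<And>k. \<theta> ^ k + cnj \<theta> ^ k + s k \<in> \<int>"
    using complex_pisot_trace_Ints[OF assms] by blast
  define h where "h i = \<bar>cos (2 * pi * Re (\<theta> ^ Suc i))\<bar>" for i
  have "summable (\<lambda>i. \<bar>h i - 1\<bar>)"
  proof (rule summable_comparison_test')
    show "summable (\<lambda>i. pi * cmod (s (Suc i)))"
      using \<open>summable (\<lambda>k. cmod (s k))\<close> summable_Suc_iff[of "\<lambda>k. cmod (s k)"]
      by (intro summable_mult) simp
    show "norm \<bar>h i - 1\<bar> \<le> pi * cmod (s (Suc i))" for i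
      using abs_cos_two_pi_Re_close_to_one[of "\<theta> ^ Suc i" "s (Suc i)"] s[of "Suc i"]
      by (simp add: h_def abs_minus_commute del: power_Suc)
  qed
  moreover have "h i \<noteq> 0" for i
    using assms
    by (simp add: h_def complex_pisot_def cos_two_pi_Re_nonzero algebraic_int_power del: power_Suc)
  ultimately obtain c where "c > 0" and "\<And>N. c \<le> \<bar>\<Prod>i<N. h i\<bar>"
    using partial_products_bounded_away_from_0 by blast
  moreover have "\<bar>\<Prod>k=1..N. cos (2 * pi * Re (\<theta> ^ k))\<bar> = \<bar>\<Prod>i<N. h i\<bar>" for N
    unfolding One_nat_def prod.atLeast1_atMost_eq by (simp add: h_def abs_prod del: power_Suc)
  ultimately show thesis
    using that by simp
qed

lemma nu_hat_conj_power:
  fixes \<theta> lam :: complex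
  assumes "lam * \<theta> = 1" and "convergent_prod (\<lambda>j. cos (2 * pi * Re (lam ^ j)))"
  shows "nu_hat lam (2 * pi * cnj \<theta> ^ N) =
    (\<Prod>k=1..N. cos (2 * pi * Re (\<theta> ^ k))) * (\<Prod>j. cos (2 * pi * Re (lam ^ j)))"
proof -
  define f where "f n = cos (Re (lam ^ n * cnj (2 * pi * cnj \<theta> ^ N)))" for n
  define g where "g j = cos (2 * pi * Re (lam ^ j))" for j
  have f_eq: "f n = cos (2 * pi * Re (lam ^ n * \<theta> ^ N))" for n
  proof -
    have "lam ^ n * cnj (2 * pi * cnj \<theta> ^ N) = 2 * of_real pi * (lam ^ n * \<theta> ^ N)"
      by simp
    then show ?thesis
      by (simp only: f_def) simp
  qed
  have head: "f n = cos (2 * pi * Re (\<theta> ^ (N - n)))" if "n \<le> N" for n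
  proof -
    have "lam ^ n * \<theta> ^ N = (lam * \<theta>) ^ n * \<theta> ^ (N - n)"
      using that by (simp add: power_mult_distrib power_add[symmetric])
    then show ?thesis
      using assms(1) by (simp add: f_eq)
  qed
  have tail: "f (N + j) = g j" for j
  proof -
    have "lam ^ (N + j) * \<theta> ^ N = (lam * \<theta>) ^ N * lam ^ j"
      by (simp add: power_add power_mult_distrib)
    then show ?thesis
      using assms(1) by (simp add: f_eq g_def)
  qed
  define A where "A = (\<Prod>n<N. f n)"
  have "A = (\<Prod>k=1..N. cos (2 * pi * Re (\<theta> ^ k)))"
    unfolding A_def
    by (rule prod.reindex_bij_witness[of _ "\<lambda>k. N - k" "\<lambda>n. N - n"]) (auto simp: head)
  moreover have "(\<lambda>M. \<Prod>n<M. f n) \<longlonglongrightarrow> A * prodinf g"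
  proof -
    have "(\<Prod>n<m + N. f n) = A * (\<Prod>j<m. g j)" for m
      by (induction m) (simp_all add: A_def tail[symmetric] ac_simps)
    moreover have "(\<lambda>m. \<Prod>j<m. g j) \<longlonglongrightarrow> prodinf g"
      using assms(2) unfolding g_def by (intro has_prod_imp_tendsto' convergent_prod_has_prod)
    ultimately have "(\<lambda>m. \<Prod>n<m + N. f n) \<longlonglongrightarrow> A * prodinf g"
      by (simp add: tendsto_mult_left)
    then show ?thesis
      by (rule LIMSEQ_offset)
  qed
  then have "nu_hat lam (2 * pi * cnj \<theta> ^ N) = A * prodinf g"
    unfolding nu_hat_def f_def by (rule limI)
  ultimately show ?thesis
    unfolding g_def[abs_def] by simp
qed

lemma complex_pisot_nu_hat_bounded_below:
  fixes \<theta> lam :: complex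
  assumes "complex_pisot \<theta>" and "algebraic_unit \<theta>" and "lam = inverse \<theta>"
  obtains \<delta> where "\<delta> > 0" and "\<And>N. \<delta> \<le> \<bar>nu_hat lam (2 * pi * cnj \<theta> ^ N)\<bar>"
proof -
  have "algebraic_int lam" and "cmod \<theta> > 1"
    using assms by (auto simp: algebraic_unit_def complex_pisot_def)
  moreover have "\<theta> \<noteq> 0"
    using \<open>cmod \<theta> > 1\<close> by auto
  ultimately have "cmod lam < 1" and "lam * \<theta> = 1"
    using assms(3) by (auto simp: norm_inverse inverse_less_1_iff)
  define G where "G = (\<Prod>j. cos (2 * pi * Re (lam ^ j)))"
  obtain c where "c > 0" and c: "\<And>N. c \<le> \<bar>\<Prod>k=1..N. cos (2 * pi * Re (\<theta> ^ k))\<bar>"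
    using complex_pisot_cos_products_bounded_below[OF assms(1)] by blast
  show thesis
  proof (rule that)
    show "c * \<bar>G\<bar> > 0"
      using \<open>c > 0\<close> convergent_prod_cos_two_pi_Re_powers(2)[OF \<open>algebraic_int lam\<close> \<open>cmod lam < 1\<close>]
      by (simp add: G_def)
    show "c * \<bar>G\<bar> \<le> \<bar>nu_hat lam (2 * pi * cnj \<theta> ^ N)\<bar>" for N
      using nu_hat_conj_power[OF \<open>lam * \<theta> = 1\<close>] c[of N]
        convergent_prod_cos_two_pi_Re_powers(1)[OF \<open>algebraic_int lam\<close> \<open>cmod lam < 1\<close>]
      by (simp add: G_def abs_mult mult_right_mono)
  qed
qed

lemma not_tendsto_0_if_bounded_below_along:
  fixes f :: "'a::real_normed_vector \<Rightarrow> real"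
  assumes "filterlim \<xi> at_infinity sequentially" and "\<delta> > 0" and "\<And>N. \<delta> \<le> \<bar>f (\<xi> N)\<bar>"
  shows "\<not> (f \<longlongrightarrow> 0) at_infinity"
proof
  assume "(f \<longlongrightarrow> 0) at_infinity"
  then have "(\<lambda>N. f (\<xi> N)) \<longlonglongrightarrow> 0"
    using assms(1) by (rule filterlim_compose)
  then have "\<forall>\<^sub>F N in sequentially. \<bar>f (\<xi> N)\<bar> < \<delta>"
    using assms(2) by (auto dest: tendstoD)
  then show False
    using assms(3) by (auto simp: eventually_sequentially not_less[symmetric])
qed

theorem mainTheorem8:
  fixes \<theta> lam :: complex
  assumes "complex_pisot \<theta>" and "1 < cmod \<theta> ^ 2" and "cmod \<theta> ^ 2 < 2"
    and "lam = 1 / \<theta>"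
  shows "alg_degree \<theta> \<ge> 3 \<and> algebraic_unit \<theta> \<and>
    (\<exists>\<delta>>0. \<forall>N::nat. N \<ge> 1 \<longrightarrow> \<bar>nu_hat lam (2 * pi * cnj \<theta> ^ N)\<bar> \<ge> \<delta>) \<and>
    \<not> ((nu_hat lam \<longlongrightarrow> 0) at_infinity)"
proof -
  have unit: "algebraic_unit \<theta>"
    using complex_pisot_algebraic_unit assms(1,3) .
  obtain \<delta> where "\<delta> > 0" and \<delta>: "\<And>N. \<delta> \<le> \<bar>nu_hat lam (2 * pi * cnj \<theta> ^ N)\<bar>"
    using complex_pisot_nu_hat_bounded_below[OF assms(1) unit] assms(4)
    by (auto simp: inverse_eq_divide)
  have "cmod \<theta> > 1"
    using assms(1) by (simp add: complex_pisot_def)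
  have "filterlim (\<lambda>N. 2 * pi * cnj \<theta> ^ N) at_infinity sequentially"
    using \<open>cmod \<theta> > 1\<close>
    by (intro tendsto_mult_filterlim_at_infinity filterlim_realpow_sequentially_gt1) auto
  then have "\<not> ((nu_hat lam \<longlongrightarrow> 0) at_infinity)"
    using \<open>\<delta> > 0\<close> \<delta> by (rule not_tendsto_0_if_bounded_below_along)
  then show ?thesis
    using complex_pisot_alg_degree_ge_3[OF assms(1-3)] unit \<open>\<delta> > 0\<close> \<delta> by auto
qed

end
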